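(* Let $n\ge 2$ and let $\widetilde X$ be an $n\times n$ real random matrix whose rows $X_1,\ldots,X_n$ are independent and identically distributed random vectors in $\mathbb{R}^n$ (with arbitrary common distribution). Then $$\liminf_{\epsilon\to0^+}\frac{\mathbb{P}\big(\sigma_{\min}(\widetilde X)<\epsilon\big)}{\epsilon}>0,$$ i.e. $0\in \mathcal{C}_1\big(\sigma_{\min}(\widetilde X)\big)$. Moreover, if $\widetilde X$ is invertible almost surely, then $$\mathbb{E}\left[\frac{1}{\sigma_{\min}(\widetilde X)}\right]=\mathbb{E}\big[\|\widetilde X^{-1}\|_2\big]=+\infty.$$
   Context: $\sigma_{\min}(A)$ denotes the smallest singular value of a square real matrix $A$, i.e. the square root of the smallest eigenvalue of $A^TA$; equivalently $\sigma_{\min}(A)=\min_{\|x\|_2=1}\|Ax\|_2$, and $\sigma_{\min}(A)=1/\|A^{-1}\|_2$ if $A$ is invertible, where $\|\cdot\|_2$ is the operator norm induced by the Euclidean norm. For a random vector $Z$ in $\mathbb{R}^k$ and an integer $m\ge0$, the $m$-dimensional mould $\mathcal{C}_m(Z)$ is the set of all $z\in\mathbb{R}^k$ with $\liminf_{\epsilon\to0^+}\mathbb{P}(\|Z-z\|_2<\epsilon)/\epsilon^m>0$. *)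

theory Defs
  imports "HOL-Probability.Probability"
begin

definition smin :: "real^'n^'n \<Rightarrow> real" where
  "smin A = Inf {norm (A *v x) | x. norm x = 1}"

definition opnorm2 :: "real^'n^'n \<Rightarrow> real" where
  "opnorm2 A = onorm (\<lambda>x. A *v x)"

end

(* Fix two rows r1, r2, round every other row to a grid of mesh eta, and take an orthonormal
   pair a, b orthogonal to the rounded rows.  If the projections of rows r1 and r2 to span {a, b}
   have nearly the same direction (the same slope cell of width d), then a unit vector of that
   plane orthogonal to row r2 is almost orthogonal to every row, so sigma_min <= 2 R d + n^2 eta.
   Conditionally on the grid cells of the other rows, independence and Cauchy-Schwarz over the
   O(1/d) slope cells show that rows r1, r2 share a cell with probability at least
   mu(B_R)^n d / O(1), where mu is the law of a row and mu(B_R) > 0.  With d ~ eps / R this gives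
   P(sigma_min < eps) >= c eps; summing over the dyadic scales eps = 2^-k yields
   E[1 / sigma_min] = infinity, and ||X^-1|| >= 1 / sigma_min. *)

theory Submission
  imports Defs
begin

section \<open>The smallest singular value\<close>

lemma norm_matrix_vector_mult_le:
  fixes A :: "real^'n^'m"
  shows "norm (A *v x) \<le> norm A * norm x"
proof -
  have "norm (A *v x) = L2_set (\<lambda>i. \<bar>A $ i \<bullet> x\<bar>) UNIV"
    by (simp add: norm_vec_def matrix_vector_mul_component)
  also have "\<dots> \<le> L2_set (\<lambda>i. norm (A $ i) * norm x) UNIV"
    by (intro L2_set_mono Cauchy_Schwarz_ineq2) auto
  also have "\<dots> = norm A * norm x"
    by (simp add: L2_set_left_distrib norm_vec_def)
  finally show ?thesis .
qed

lemma smin_le: "norm u = 1 \<Longrightarrow> smin A \<le> norm (A *v u)"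
  unfolding smin_def by (rule cInf_lower) (auto intro: bdd_belowI[of _ 0])

lemma smin_greatest:
  fixes A :: "real^'n^'n"
  assumes "\<And>x. norm x = 1 \<Longrightarrow> c \<le> norm (A *v x)"
  shows "c \<le> smin A"
proof -
  obtain u :: "real^'n" where "norm u = 1" using norm_axis_1 by blast
  then have "{norm (A *v x) | x. norm x = 1} \<noteq> {}" by blast
  then show ?thesis
    unfolding smin_def using assms by (intro cInf_greatest) auto
qed

lemma smin_le_add_norm_diff:
  fixes A B :: "real^'n^'n"
  shows "smin A \<le> smin B + norm (A - B)"
proof -
  have "smin A - norm (A - B) \<le> smin B"
  proof (rule smin_greatest)
    fix x :: "real^'n" assume x: "norm x = 1"
    have "norm (A *v x) \<le> norm (B *v x) + norm ((A - B) *v x)"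
      by (metis matrix_vector_mult_diff_rdistrib diff_add_cancel norm_triangle_ineq add.commute
          norm_triangle_ineq4 add_diff_cancel_left')
    also have "norm ((A - B) *v x) \<le> norm (A - B)"
      using norm_matrix_vector_mult_le[of "A - B" x] x by simp
    finally show "smin A - norm (A - B) \<le> norm (B *v x)"
      using smin_le[OF x, of A] by linarith
  qed
  then show ?thesis by linarith
qed

lemma lipschitz_on_smin: "1-lipschitz_on UNIV smin"
proof (rule lipschitz_onI)
  fix A B :: "real^'n^'n"
  show "dist (smin A) (smin B) \<le> 1 * dist A B"
    using smin_le_add_norm_diff[of A B] smin_le_add_norm_diff[of B A]
    by (simp add: dist_norm norm_minus_commute abs_le_iff)
qed simp

lemma borel_measurable_smin[measurable]: "smin \<in> borel_measurable borel"
  using lipschitz_on_smin by (intro borel_measurable_continuous_onI lipschitz_on_continuous_on)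

lemma smin_le_sum_abs_inner_rows:
  fixes Y :: "'n::finite \<Rightarrow> real^'n"
  assumes "norm u = 1"
  shows "smin (\<chi> i. Y i) \<le> (\<Sum>i\<in>UNIV. \<bar>Y i \<bullet> u\<bar>)"
proof -
  have "smin (\<chi> i. Y i) \<le> norm ((\<chi> i. Y i) *v u)" by (rule smin_le[OF assms])
  also have "\<dots> \<le> (\<Sum>i\<in>UNIV. \<bar>((\<chi> i. Y i) *v u) $ i\<bar>)" by (rule norm_le_l1_cart)
  finally show ?thesis by (simp add: matrix_vector_mul_component)
qed

lemma invertible_smin_pos_inverse_le_opnorm2:
  fixes A :: "real^'n^'n"
  assumes "invertible A"
  shows "0 < smin A \<and> 1 / smin A \<le> opnorm2 (matrix_inv A)"
proof -
  define B where "B = matrix_inv A"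
  have BA: "B ** A = mat 1"
    using assms unfolding B_def matrix_inv_def invertible_def by (metis (mono_tags, lifting) someI_ex)
  have bl: "bounded_linear ((*v) B)" by (rule matrix_vector_mul_bounded_linear)
  have B_x: "B *v (A *v x) = x" for x by (simp add: matrix_vector_mul_assoc BA)
  obtain u :: "real^'n" where "norm u = 1" using norm_axis_1 by blast
  then have pos: "0 < onorm ((*v) B)"
    using onorm_pos_lt[OF bl] B_x[of u] by (metis norm_zero zero_neq_one)
  have lb: "1 / onorm ((*v) B) \<le> smin A"
  proof (rule smin_greatest)
    fix x :: "real^'n" assume x: "norm x = 1"
    have "1 = norm (B *v (A *v x))" using x by (simp add: B_x)
    also have "\<dots> \<le> onorm ((*v) B) * norm (A *v x)" using onorm[OF bl] .
    finally show "1 / onorm ((*v) B) \<le> norm (A *v x)" using pos by (simp add: field_simps)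
  qed
  then have "0 < smin A" using pos by (meson order_less_le_trans zero_less_divide_1_iff)
  moreover have "1 / smin A \<le> onorm ((*v) B)" using lb pos \<open>0 < smin A\<close> by (simp add: field_simps)
  ultimately show ?thesis unfolding opnorm2_def B_def by simp
qed

section \<open>Slope cells and the planar witness\<close>

lemma floor_le_ceiling_abs:
  fixes v c :: real
  assumes "\<bar>v\<bar> \<le> c"
  shows "\<lfloor>v\<rfloor> \<in> {-\<lceil>c\<rceil>..\<lceil>c\<rceil>}"
proof -
  have "v \<le> of_int \<lceil>c\<rceil>" "- of_int \<lceil>c\<rceil> \<le> v"
    using assms le_of_int_ceiling[of c] by linarith+
  then show ?thesis by (simp add: floor_le_iff le_floor_iff)
qed

lemma abs_diff_less_if_floor_divide_eq:
  fixes s t d :: real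
  assumes "\<lfloor>s / d\<rfloor> = \<lfloor>t / d\<rfloor>" "d > 0"
  shows "\<bar>s - t\<bar> < d"
proof -
  have "\<bar>s / d - t / d\<bar> < 1"
    using assms(1) by linarith
  then show ?thesis using assms(2) by (simp add: diff_divide_distrib[symmetric] abs_divide)
qed

text \<open>Points with the same label lie on nearly the same line through the origin: the chart keeps
  the slope in \<open>[-1, 1]\<close>, and the label fixes it up to \<open>d\<close>.\<close>
definition slope_cell :: "real \<Rightarrow> real \<Rightarrow> real \<Rightarrow> int \<times> int" where
  "slope_cell d p q = (if \<bar>q\<bar> \<le> \<bar>p\<bar> then (0, \<lfloor>q / p / d\<rfloor>) else (1, \<lfloor>p / q / d\<rfloor>))"

lemma slope_cell_range:
  assumes "d > 0"
  shows "slope_cell d p q \<in> {0, 1} \<times> {-\<lceil>1 / d\<rceil>..\<lceil>1 / d\<rceil>}"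
proof -
  have cell: "\<lfloor>s / d\<rfloor> \<in> {-\<lceil>1 / d\<rceil>..\<lceil>1 / d\<rceil>}" if "\<bar>s\<bar> \<le> 1" for s
    using that assms by (intro floor_le_ceiling_abs) (simp add: abs_divide divide_right_mono)
  show ?thesis
  proof (cases "\<bar>q\<bar> \<le> \<bar>p\<bar>")
    case True
    then have "\<bar>q / p\<bar> \<le> 1" by (simp add: abs_divide divide_le_eq_1)
    with True show ?thesis using cell[of "q / p"] by (simp add: slope_cell_def)
  next
    case False
    then have "\<bar>p / q\<bar> \<le> 1" by (simp add: abs_divide divide_le_eq_1)
    with False show ?thesis using cell[of "p / q"] by (simp add: slope_cell_def)
  qed
qed

lemma unit_orthogonal_near_slope:
  fixes p q p' q' :: real
  assumes "\<bar>q\<bar> \<le> \<bar>p\<bar>" "\<bar>q'\<bar> \<le> \<bar>p'\<bar>" "\<bar>q / p - q' / p'\<bar> \<le> d"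
  obtains v1 v2 where "v1\<^sup>2 + v2\<^sup>2 = 1" "v1 * p' + v2 * q' = 0" "\<bar>v1 * p + v2 * q\<bar> \<le> d * \<bar>p\<bar>"
proof -
  define t1 t2 where "t1 = q / p" and "t2 = q' / p'"
  have q: "q = t1 * p" and q': "q' = t2 * p'"
    using assms(1,2) unfolding t1_def t2_def by auto
  define s where "s = sqrt (1 + t2\<^sup>2)"
  have "1 + t2\<^sup>2 > 0" by (simp add: add_pos_nonneg)
  then have s: "s \<ge> 1" "s\<^sup>2 = 1 + t2\<^sup>2" "s\<^sup>2 \<noteq> 0" unfolding s_def by simp_all
  show ?thesis
  proof
    show "(- t2 / s)\<^sup>2 + (1 / s)\<^sup>2 = 1"
      using s by (simp add: power_divide add_divide_distrib[symmetric])
    show "- t2 / s * p' + 1 / s * q' = 0" using q' by (simp add: field_simps)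
    have "- t2 / s * p + 1 / s * q = (t1 - t2) * p / s"
      using q s(1) by (simp add: field_simps)
    then have "\<bar>- t2 / s * p + 1 / s * q\<bar> = \<bar>t1 - t2\<bar> * \<bar>p\<bar> / s"
      using s(1) by (simp add: abs_mult abs_divide)
    also have "\<dots> \<le> \<bar>t1 - t2\<bar> * \<bar>p\<bar>" using divide_left_mono[of 1 s "\<bar>t1 - t2\<bar> * \<bar>p\<bar>"] s(1) by simp
    also have "\<dots> \<le> d * \<bar>p\<bar>" using assms(3) unfolding t1_def t2_def by (simp add: mult_right_mono)
    finally show "\<bar>- t2 / s * p + 1 / s * q\<bar> \<le> d * \<bar>p\<bar>" .
  qed
qed

lemma unit_orthogonal_same_slope_cell:
  assumes "slope_cell d p q = slope_cell d p' q'" "d > 0"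
  obtains v1 v2 where "v1\<^sup>2 + v2\<^sup>2 = 1" "v1 * p' + v2 * q' = 0"
    "\<bar>v1 * p + v2 * q\<bar> \<le> d * (\<bar>p\<bar> + \<bar>q\<bar>)"
proof (cases "\<bar>q'\<bar> \<le> \<bar>p'\<bar>")
  case True
  with assms(1) have "\<bar>q\<bar> \<le> \<bar>p\<bar>" "\<lfloor>q / p / d\<rfloor> = \<lfloor>q' / p' / d\<rfloor>"
    unfolding slope_cell_def by (auto split: if_splits)
  moreover from this have "\<bar>q / p - q' / p'\<bar> \<le> d"
    using abs_diff_less_if_floor_divide_eq assms(2) by (meson less_imp_le)
  ultimately obtain v1 v2 where "v1\<^sup>2 + v2\<^sup>2 = 1" "v1 * p' + v2 * q' = 0" "\<bar>v1 * p + v2 * q\<bar> \<le> d * \<bar>p\<bar>"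
    using unit_orthogonal_near_slope True by blast
  moreover have "d * \<bar>p\<bar> \<le> d * (\<bar>p\<bar> + \<bar>q\<bar>)" using assms(2) by simp
  ultimately show ?thesis using that by (meson order_trans)
next
  case False
  with assms(1) have "\<not> \<bar>q\<bar> \<le> \<bar>p\<bar>" "\<lfloor>p / q / d\<rfloor> = \<lfloor>p' / q' / d\<rfloor>"
    unfolding slope_cell_def by (auto split: if_splits)
  moreover from this have "\<bar>p / q - p' / q'\<bar> \<le> d"
    using abs_diff_less_if_floor_divide_eq assms(2) by (meson less_imp_le)
  moreover have "\<bar>p\<bar> \<le> \<bar>q\<bar>" "\<bar>p'\<bar> \<le> \<bar>q'\<bar>" using False calculation(1) by linarith+
  ultimately obtain v1 v2 where "v2\<^sup>2 + v1\<^sup>2 = 1" "v2 * q' + v1 * p' = 0" "\<bar>v2 * q + v1 * p\<bar> \<le> d * \<bar>q\<bar>"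
    using unit_orthogonal_near_slope[where p=q and q=p and p'=q' and q'=p'] by blast
  moreover have "d * \<bar>q\<bar> \<le> d * (\<bar>p\<bar> + \<bar>q\<bar>)" using assms(2) by simp
  ultimately show ?thesis using that[of v1 v2] by (simp add: add.commute)
qed

text \<open>The witness is a unit vector of \<open>span {a, b}\<close> orthogonal to row \<open>r\<^sub>2\<close>; by the equal slope
  cells it is nearly orthogonal to row \<open>r\<^sub>1\<close>.\<close>
lemma smin_le_if_rows_near_plane_same_slope_cell:
  fixes Y c :: "'n::finite \<Rightarrow> real^'n"
  assumes ab: "norm a = 1" "norm b = 1" "a \<bullet> b = 0"
    and c: "\<And>i. i \<notin> {r1, r2} \<Longrightarrow> c i \<bullet> a = 0 \<and> c i \<bullet> b = 0"
    and near: "\<And>i. i \<notin> {r1, r2} \<Longrightarrow> norm (Y i - c i) \<le> h" and "0 \<le> h"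
    and R: "norm (Y r1) \<le> R"
    and cell: "slope_cell d (Y r1 \<bullet> a) (Y r1 \<bullet> b) = slope_cell d (Y r2 \<bullet> a) (Y r2 \<bullet> b)"
    and "d > 0"
  shows "smin (\<chi> i. Y i) \<le> 2 * R * d + real CARD('n) * h"
proof -
  obtain v1 v2 where v: "v1\<^sup>2 + v2\<^sup>2 = 1" "v1 * (Y r2 \<bullet> a) + v2 * (Y r2 \<bullet> b) = 0"
    "\<bar>v1 * (Y r1 \<bullet> a) + v2 * (Y r1 \<bullet> b)\<bar> \<le> d * (\<bar>Y r1 \<bullet> a\<bar> + \<bar>Y r1 \<bullet> b\<bar>)"
    using unit_orthogonal_same_slope_cell[OF cell \<open>d > 0\<close>] by blast
  define u where "u = v1 *\<^sub>R a + v2 *\<^sub>R b"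
  have inner_u: "y \<bullet> u = v1 * (y \<bullet> a) + v2 * (y \<bullet> b)" for y
    unfolding u_def by (simp add: inner_add_right)
  have "u \<bullet> u = v1\<^sup>2 + v2\<^sup>2"
    using ab by (simp add: inner_u inner_commute power2_eq_square norm_eq_1)
  then have u: "norm u = 1" using v(1) by (simp add: norm_eq_1)
  have row_bound: "\<bar>Y i \<bullet> u\<bar> \<le> (if i = r1 then 2 * R * d else 0) + h" for i
  proof -
    consider "i = r1" | "i = r2" "i \<noteq> r1" | "i \<notin> {r1, r2}" by blast
    then show ?thesis
    proof cases
      case 1
      have "\<bar>Y r1 \<bullet> a\<bar> \<le> R" "\<bar>Y r1 \<bullet> b\<bar> \<le> R"
        using Cauchy_Schwarz_ineq2[of "Y r1"] ab R by (metis mult_cancel_left1 order_trans)+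
      then have "d * (\<bar>Y r1 \<bullet> a\<bar> + \<bar>Y r1 \<bullet> b\<bar>) \<le> 2 * R * d" using \<open>d > 0\<close> by simp
      then show ?thesis using 1 v(3) \<open>0 \<le> h\<close> by (simp add: inner_u)
    next
      case 2
      then show ?thesis using v(2) \<open>0 \<le> h\<close> by (simp add: inner_u)
    next
      case 3
      then have "Y i \<bullet> u = (Y i - c i) \<bullet> u"
        using c by (simp add: inner_diff_left inner_u)
      also have "\<bar>\<dots>\<bar> \<le> norm (Y i - c i)"
        using Cauchy_Schwarz_ineq2[of "Y i - c i" u] u by simp
      finally show ?thesis using 3 near by fastforce
    qed
  qed
  have "smin (\<chi> i. Y i) \<le> (\<Sum>i\<in>UNIV. \<bar>Y i \<bullet> u\<bar>)" by (rule smin_le_sum_abs_inner_rows[OF u])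
  also have "\<dots> \<le> (\<Sum>i\<in>UNIV. (if i = r1 then 2 * R * d else 0) + h)" by (intro sum_mono row_bound)
  also have "\<dots> = 2 * R * d + real CARD('n) * h" by (simp add: sum.distrib)
  finally show ?thesis .
qed

lemma card_Compl_doubleton:
  fixes r1 r2 :: "'a::finite"
  assumes "r1 \<noteq> r2"
  shows "card (- {r1, r2}) + 2 = CARD('a)"
proof -
  have "card {r1, r2} \<le> CARD('a)" by (rule card_mono) auto
  then show ?thesis using assms by (simp add: Compl_eq_Diff_UNIV card_Diff_subset)
qed

definition orthonormal_pair_orthogonal_to :: "(real^'n) set \<Rightarrow> (real^'n) \<times> (real^'n)" where
  "orthonormal_pair_orthogonal_to S = (SOME (a, b). norm a = 1 \<and> norm b = 1 \<and> a \<bullet> b = 0 \<and>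
    (\<forall>c\<in>S. c \<bullet> a = 0 \<and> c \<bullet> b = 0))"

lemma orthonormal_pair_orthogonal_to:
  fixes S :: "(real^'n) set"
  assumes "finite S" "card S + 2 \<le> CARD('n)" and ab: "orthonormal_pair_orthogonal_to S = (a, b)"
  shows "norm a = 1" "norm b = 1" "a \<bullet> b = 0" "\<And>c. c \<in> S \<Longrightarrow> c \<bullet> a = 0 \<and> c \<bullet> b = 0"
proof -
  define W where "W = {y \<in> UNIV. \<forall>x \<in> span S. orthogonal x y}"
  have "dim W + dim (span S) = dim (UNIV :: (real^'n) set)"
    unfolding W_def by (rule dim_subspace_orthogonal_to_vectors) auto
  moreover have "dim (span S) \<le> card S" using assms(1) by (simp add: dim_le_card')
  ultimately have "2 \<le> dim W" using assms(2) by simp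
  have "subspace W" unfolding W_def by (auto simp: subspace_def orthogonal_clauses)
  then obtain C where C: "C \<subseteq> W" "pairwise orthogonal C" "\<And>x. x \<in> C \<Longrightarrow> norm x = 1"
     "independent C" "card C = dim W"
    by (metis orthonormal_basis_subspace)
  with \<open>2 \<le> dim W\<close> obtain a' b' where ab': "a' \<in> C" "b' \<in> C" "a' \<noteq> b'"
    by (metis card_2_iff' card_le_Suc0_iff_eq independent_imp_finite not_less_eq_eq numeral_2_eq_2)
  have "a' \<bullet> b' = 0" using C(2) ab' unfolding pairwise_def orthogonal_def by blast
  moreover have "c \<bullet> a' = 0 \<and> c \<bullet> b' = 0" if "c \<in> S" for c
    using that ab' C(1) unfolding W_def orthogonal_def by (auto simp: span_base)
  ultimately have "\<exists>p. case p of (a, b) \<Rightarrow> norm a = 1 \<and> norm b = 1 \<and> a \<bullet> b = 0 \<and>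
      (\<forall>c\<in>S. c \<bullet> a = 0 \<and> c \<bullet> b = 0)"
    using ab' C(3) by (intro exI[of _ "(a', b')"]) simp
  from someI_ex[OF this] show "norm a = 1" "norm b = 1" "a \<bullet> b = 0" "\<And>c. c \<in> S \<Longrightarrow> c \<bullet> a = 0 \<and> c \<bullet> b = 0"
    using ab unfolding orthonormal_pair_orthogonal_to_def by simp_all
qed

definition plane_label :: "real \<Rightarrow> (real^'n) set \<Rightarrow> real^'n \<Rightarrow> int \<times> int" where
  "plane_label d C x = (case orthonormal_pair_orthogonal_to C of (a, b) \<Rightarrow> slope_cell d (x \<bullet> a) (x \<bullet> b))"

lemma plane_label_range: "0 < d \<Longrightarrow> plane_label d C x \<in> {0, 1} \<times> {-\<lceil>1 / d\<rceil>..\<lceil>1 / d\<rceil>}"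
  unfolding plane_label_def by (simp add: slope_cell_range split: prod.split)

definition grid_index :: "real \<Rightarrow> real^'n \<Rightarrow> 'n \<Rightarrow> int" where
  "grid_index \<eta> x = (\<lambda>j. \<lfloor>x $ j / \<eta>\<rfloor>)"

definition grid_point :: "real \<Rightarrow> ('n \<Rightarrow> int) \<Rightarrow> real^'n" where
  "grid_point \<eta> g = (\<chi> j. \<eta> * of_int (g j))"

lemma norm_diff_grid_point_le:
  fixes x :: "real^'n::finite"
  assumes "\<eta> > 0"
  shows "norm (x - grid_point \<eta> (grid_index \<eta> x)) \<le> real CARD('n) * \<eta>"
proof -
  have "\<bar>(x - grid_point \<eta> (grid_index \<eta> x)) $ j\<bar> \<le> \<eta>" for j
  proof -
    define t where "t = x $ j / \<eta>"
    have "(x - grid_point \<eta> (grid_index \<eta> x)) $ j = \<eta> * (t - of_int \<lfloor>t\<rfloor>)"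
      using assms by (simp add: grid_point_def grid_index_def t_def field_simps)
    moreover have "0 \<le> t - of_int \<lfloor>t\<rfloor>" "t - of_int \<lfloor>t\<rfloor> \<le> 1" by linarith+
    ultimately show ?thesis using assms by (simp add: abs_mult mult_left_le)
  qed
  then have "(\<Sum>j\<in>UNIV. \<bar>(x - grid_point \<eta> (grid_index \<eta> x)) $ j\<bar>) \<le> real CARD('n) * \<eta>"
    using sum_mono[of UNIV "\<lambda>j. \<bar>(x - grid_point \<eta> (grid_index \<eta> x)) $ j\<bar>" "\<lambda>_. \<eta>"] by simp
  then show ?thesis using norm_le_l1_cart order_trans by blast
qed

lemma grid_index_range:
  fixes x :: "real^'n::finite"
  assumes "norm x \<le> R" "\<eta> > 0"
  shows "grid_index \<eta> x \<in> UNIV \<rightarrow>\<^sub>E {-\<lceil>R / \<eta>\<rceil>..\<lceil>R / \<eta>\<rceil>}"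
proof -
  have "\<bar>x $ j / \<eta>\<bar> \<le> R / \<eta>" for j
    using assms component_le_norm_cart[of x j] by (simp add: abs_divide divide_right_mono)
  then show ?thesis unfolding grid_index_def by (auto intro: floor_le_ceiling_abs)
qed

lemma smin_le_if_same_plane_label:
  fixes Y :: "'n::finite \<Rightarrow> real^'n" and r1 r2 :: 'n and \<eta> :: real
  defines "C \<equiv> (\<lambda>i. grid_point \<eta> (grid_index \<eta> (Y i))) ` (- {r1, r2})"
  assumes "r1 \<noteq> r2" "0 < \<eta>" "0 < d" "norm (Y r1) \<le> R"
    and "plane_label d C (Y r1) = plane_label d C (Y r2)"
  shows "smin (\<chi> i. Y i) \<le> 2 * R * d + (real CARD('n))\<^sup>2 * \<eta>"
proof -
  obtain a b where ab: "orthonormal_pair_orthogonal_to C = (a, b)" by fastforce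
  have "card C \<le> card (- {r1, r2})" unfolding C_def by (rule card_image_le) simp
  then have "card C + 2 \<le> CARD('n)" using card_Compl_doubleton[OF \<open>r1 \<noteq> r2\<close>] by simp
  note frame = orthonormal_pair_orthogonal_to[OF _ this ab]
  have "smin (\<chi> i. Y i) \<le> 2 * R * d + real CARD('n) * (real CARD('n) * \<eta>)"
  proof (rule smin_le_if_rows_near_plane_same_slope_cell[where c = "\<lambda>i. grid_point \<eta> (grid_index \<eta> (Y i))"])
    show "norm a = 1" "norm b = 1" "a \<bullet> b = 0" using frame unfolding C_def by simp_all
    show "grid_point \<eta> (grid_index \<eta> (Y i)) \<bullet> a = 0 \<and> grid_point \<eta> (grid_index \<eta> (Y i)) \<bullet> b = 0"
      if "i \<notin> {r1, r2}" for i using frame(4) that unfolding C_def by simp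
    show "norm (Y i - grid_point \<eta> (grid_index \<eta> (Y i))) \<le> real CARD('n) * \<eta>" for i
      by (rule norm_diff_grid_point_le[OF \<open>0 < \<eta>\<close>])
    show "slope_cell d (Y r1 \<bullet> a) (Y r1 \<bullet> b) = slope_cell d (Y r2 \<bullet> a) (Y r2 \<bullet> b)"
      using assms(6) ab unfolding plane_label_def by simp
  qed (use assms in simp_all)
  then show ?thesis by (simp add: power2_eq_square)
qed

section \<open>Two rows in a common cell\<close>

lemma square_sum_div_card_le_sum_squares:
  fixes a :: "'b \<Rightarrow> real"
  shows "(\<Sum>i\<in>S. a i)\<^sup>2 / card S \<le> (\<Sum>i\<in>S. (a i)\<^sup>2)"
proof (cases "finite S \<and> S \<noteq> {}")
  case True
  have "(\<Sum>i\<in>S. a i * 1)\<^sup>2 \<le> (\<Sum>i\<in>S. (a i)\<^sup>2) * (\<Sum>i\<in>S. 1\<^sup>2)" by (rule Cauchy_Schwarz_ineq_sum)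
  then show ?thesis using True by (simp add: divide_le_eq)
qed (auto simp: sum_nonneg)

lemma (in finite_measure) sum_measure_level_sets:
  assumes "finite L" "f ` S \<subseteq> L" "\<And>l. {x \<in> S. f x = l} \<in> sets M"
  shows "(\<Sum>l\<in>L. measure M {x \<in> S. f x = l}) = measure M S"
proof -
  have "(\<Sum>l\<in>L. measure M {x \<in> S. f x = l}) = measure M (\<Union>l\<in>L. {x \<in> S. f x = l})"
    using assms by (intro finite_measure_finite_Union[symmetric]) (auto simp: disjoint_family_on_def)
  also have "(\<Union>l\<in>L. {x \<in> S. f x = l}) = S" using assms(2) by auto
  finally show ?thesis .
qed

text \<open>Cauchy--Schwarz on the \<open>\<psi> t\<close>-partition, then expansion of the product of the
  \<open>\<phi>-\<close>partition sums.\<close>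
lemma (in finite_measure) measure_power_div_card_le_sum_level_sets:
  assumes "finite I"
    and G: "finite G" "\<phi> ` S \<subseteq> G" "\<And>g. {x \<in> S. \<phi> x = g} \<in> sets M"
    and K: "finite K" "\<And>t. \<psi> t ` S \<subseteq> K" "\<And>t k. {x \<in> S. \<psi> t x = k} \<in> sets M"
  shows "measure M S ^ (card I + 2) / card K \<le>
    (\<Sum>t\<in>I \<rightarrow>\<^sub>E G. (\<Prod>i\<in>I. measure M {x \<in> S. \<phi> x = t i}) * (\<Sum>k\<in>K. (measure M {x \<in> S. \<psi> t x = k})\<^sup>2))"
proof -
  define P where "P t = (\<Prod>i\<in>I. measure M {x \<in> S. \<phi> x = t i})" for t
  have "(\<Sum>t\<in>I \<rightarrow>\<^sub>E G. P t) = (\<Prod>i\<in>I. \<Sum>g\<in>G. measure M {x \<in> S. \<phi> x = g})"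
    unfolding P_def by (rule prod_sum_PiE[symmetric]) (use assms in auto)
  also have "\<dots> = measure M S ^ card I"
    using sum_measure_level_sets[OF G] by simp
  finally have "measure M S ^ (card I + 2) / card K = (\<Sum>t\<in>I \<rightarrow>\<^sub>E G. P t) * ((measure M S)\<^sup>2 / card K)"
    by (simp add: power_add power2_eq_square)
  also have "\<dots> = (\<Sum>t\<in>I \<rightarrow>\<^sub>E G. P t * ((measure M S)\<^sup>2 / card K))"
    by (rule sum_distrib_right)
  also have "\<dots> \<le> (\<Sum>t\<in>I \<rightarrow>\<^sub>E G. P t * (\<Sum>k\<in>K. (measure M {x \<in> S. \<psi> t x = k})\<^sup>2))"
  proof (intro sum_mono mult_left_mono)
    fix t
    show "(measure M S)\<^sup>2 / card K \<le> (\<Sum>k\<in>K. (measure M {x \<in> S. \<psi> t x = k})\<^sup>2)"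
      using square_sum_div_card_le_sum_squares[of "\<lambda>k. measure M {x \<in> S. \<psi> t x = k}" K]
        sum_measure_level_sets[OF K(1,2,3)] by simp
    show "0 \<le> P t" unfolding P_def by (simp add: prod_nonneg)
  qed
  finally show ?thesis unfolding P_def .
qed

lemma (in prob_space) prob_iid_all_in:
  fixes X :: "'i::finite \<Rightarrow> 'a \<Rightarrow> 'b"
  assumes "indep_vars (\<lambda>_. N) X UNIV" "\<And>i. distr M N (X i) = \<mu>" "\<And>i. B i \<in> sets N"
  shows "prob {\<omega> \<in> space M. \<forall>i. X i \<omega> \<in> B i} = (\<Prod>i\<in>UNIV. measure \<mu> (B i))"
proof -
  have X: "X i \<in> measurable M N" for i using assms(1) by (auto simp: indep_vars_def)
  have "{\<omega> \<in> space M. \<forall>i. X i \<omega> \<in> B i} = (\<Inter>i\<in>UNIV. X i -` B i \<inter> space M)" by auto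
  then have "prob {\<omega> \<in> space M. \<forall>i. X i \<omega> \<in> B i} = (\<Prod>i\<in>UNIV. prob (X i -` B i \<inter> space M))"
    using indep_varsD[OF assms(1)] assms(3) by simp
  also have "\<dots> = (\<Prod>i\<in>UNIV. measure \<mu> (B i))"
    using measure_distr[OF X assms(3)] assms(2) by (metis (no_types, lifting))
  finally show ?thesis .
qed

lemma same_label_event_eq_disjoint_Union:
  fixes X :: "'i \<Rightarrow> 'a \<Rightarrow> 'b" and \<phi> :: "'b \<Rightarrow> 'g" and \<psi> :: "('i \<Rightarrow> 'g) \<Rightarrow> 'b \<Rightarrow> 'k"
    and S :: "'b set" and \<Omega> :: "'a set" and r1 r2 :: 'i
  defines "A t k \<equiv> {\<omega> \<in> \<Omega>. \<forall>i. X i \<omega> \<in> (if i \<in> - {r1, r2} then {x \<in> S. \<phi> x = t i} else {x \<in> S. \<psi> t x = k})}"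
  assumes "\<phi> ` S \<subseteq> G" "\<And>t. \<psi> t ` S \<subseteq> K"
  shows "{\<omega> \<in> \<Omega>. (\<forall>i. X i \<omega> \<in> S) \<and> \<psi> (restrict (\<lambda>i. \<phi> (X i \<omega>)) (- {r1, r2})) (X r1 \<omega>) =
      \<psi> (restrict (\<lambda>i. \<phi> (X i \<omega>)) (- {r1, r2})) (X r2 \<omega>)} = (\<Union>(t, k)\<in>(- {r1, r2} \<rightarrow>\<^sub>E G) \<times> K. A t k)"
      (is "?E = _")
    and "disjoint_family_on (\<lambda>(t, k). A t k) ((- {r1, r2} \<rightarrow>\<^sub>E G) \<times> K)"
proof -
  have in_A: "restrict (\<lambda>i. \<phi> (X i \<omega>)) (- {r1, r2}) = t \<and> (\<forall>i. X i \<omega> \<in> S) \<and>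
      \<psi> t (X r1 \<omega>) = k \<and> \<psi> t (X r2 \<omega>) = k" if "t \<in> - {r1, r2} \<rightarrow>\<^sub>E G" "\<omega> \<in> A t k" for t k \<omega>
  proof -
    have \<omega>: "X i \<omega> \<in> (if i \<in> - {r1, r2} then {x \<in> S. \<phi> x = t i} else {x \<in> S. \<psi> t x = k})" for i
      using that(2) unfolding A_def by blast
    then have "restrict (\<lambda>i. \<phi> (X i \<omega>)) (- {r1, r2}) = t"
      using that(1) by (force simp: PiE_def extensional_def split: if_splits)
    moreover have "X i \<omega> \<in> S" for i using \<omega>[of i] by (auto split: if_splits)
    moreover have "\<psi> t (X r1 \<omega>) = k" "\<psi> t (X r2 \<omega>) = k" using \<omega>[of r1] \<omega>[of r2] by auto
    ultimately show ?thesis by blast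
  qed
  show "?E = (\<Union>(t, k)\<in>(- {r1, r2} \<rightarrow>\<^sub>E G) \<times> K. A t k)"
  proof (intro equalityI subsetI)
    fix \<omega> assume \<omega>: "\<omega> \<in> ?E"
    define t where "t = restrict (\<lambda>i. \<phi> (X i \<omega>)) (- {r1, r2})"
    have "t \<in> - {r1, r2} \<rightarrow>\<^sub>E G" using \<omega> assms(2) unfolding t_def by auto
    moreover have "\<psi> t (X r1 \<omega>) \<in> K" using \<omega> assms(3) by blast
    moreover have "\<omega> \<in> A t (\<psi> t (X r1 \<omega>))" using \<omega> unfolding A_def t_def by auto
    ultimately show "\<omega> \<in> (\<Union>(t, k)\<in>(- {r1, r2} \<rightarrow>\<^sub>E G) \<times> K. A t k)" by blast
  next
    fix \<omega> assume "\<omega> \<in> (\<Union>(t, k)\<in>(- {r1, r2} \<rightarrow>\<^sub>E G) \<times> K. A t k)"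
    then obtain t k where "t \<in> - {r1, r2} \<rightarrow>\<^sub>E G" "\<omega> \<in> A t k" by blast
    then show "\<omega> \<in> ?E" using in_A[of t \<omega> k] unfolding A_def by auto
  qed
  show "disjoint_family_on (\<lambda>(t, k). A t k) ((- {r1, r2} \<rightarrow>\<^sub>E G) \<times> K)"
    unfolding disjoint_family_on_def by (auto dest: in_A)
qed

text \<open>The labelling \<open>\<psi> t\<close> of rows \<open>r\<^sub>1, r\<^sub>2\<close> may depend on the \<open>\<phi>\<close>-labels \<open>t\<close> of all other rows.\<close>
lemma (in prob_space) prob_two_rows_same_label_ge:
  fixes X :: "'i::finite \<Rightarrow> 'a \<Rightarrow> 'b" and \<phi> :: "'b \<Rightarrow> 'g" and \<psi> :: "('i \<Rightarrow> 'g) \<Rightarrow> 'b \<Rightarrow> 'k"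
  assumes indep: "indep_vars (\<lambda>_. N) X UNIV" and law: "\<And>i. distr M N (X i) = \<mu>" and "r1 \<noteq> r2"
    and G: "finite G" "\<phi> ` S \<subseteq> G" "\<And>g. {x \<in> S. \<phi> x = g} \<in> sets N"
    and K: "finite K" "\<And>t. \<psi> t ` S \<subseteq> K" "\<And>t k. {x \<in> S. \<psi> t x = k} \<in> sets N"
  shows "measure \<mu> S ^ CARD('i) / card K \<le> prob {\<omega> \<in> space M. (\<forall>i. X i \<omega> \<in> S) \<and>
    \<psi> (restrict (\<lambda>i. \<phi> (X i \<omega>)) (- {r1, r2})) (X r1 \<omega>) =
    \<psi> (restrict (\<lambda>i. \<phi> (X i \<omega>)) (- {r1, r2})) (X r2 \<omega>)}" (is "_ \<le> prob ?E")
proof -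
  define rest :: "'i set" where "rest = - {r1, r2}"
  define T where "T = rest \<rightarrow>\<^sub>E G"
  define cell where "cell t k i = (if i \<in> rest then {x \<in> S. \<phi> x = t i} else {x \<in> S. \<psi> t x = k})" for t k i
  define A where "A t k = {\<omega> \<in> space M. \<forall>i. X i \<omega> \<in> cell t k i}" for t k
  define P where "P t = (\<Prod>i\<in>rest. measure \<mu> {x \<in> S. \<phi> x = t i})" for t
  have X: "X i \<in> measurable M N" for i using indep by (auto simp: indep_vars_def)
  then have fin_\<mu>: "finite_measure \<mu>" and sets_\<mu>: "sets \<mu> = sets N"
    using prob_space_distr law[of r1] by (auto simp: prob_space_def)
  have cell_sets: "cell t k i \<in> sets N" for t k i
    unfolding cell_def using G(3) K(3) by simp
  have A_sets: "A t k \<in> events" for t k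
  proof -
    have "{\<omega> \<in> space M. X i \<omega> \<in> cell t k i} \<in> events" for i
      using measurable_sets[OF X cell_sets, of i t k i] by (simp add: vimage_def Int_def conj_commute)
    then show ?thesis unfolding A_def using sets.sets_Collect_finite_All[of UNIV] by simp
  qed
  have event: "?E = (\<Union>(t, k)\<in>T \<times> K. A t k)" "disjoint_family_on (\<lambda>(t, k). A t k) (T \<times> K)"
    unfolding A_def cell_def T_def rest_def by (rule same_label_event_eq_disjoint_Union[OF G(2) K(2)])+
  have rest: "r1 \<notin> rest" "r2 \<notin> rest" "card rest + 2 = CARD('i)"
    using card_Compl_doubleton[OF \<open>r1 \<noteq> r2\<close>] unfolding rest_def by auto
  have prob_A: "prob (A t k) = P t * (measure \<mu> {x \<in> S. \<psi> t x = k})\<^sup>2" for t k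
  proof -
    have UNIV_eq: "UNIV = insert r1 (insert r2 rest)" unfolding rest_def by auto
    have "prob (A t k) = (\<Prod>i\<in>UNIV. measure \<mu> (cell t k i))"
      unfolding A_def by (rule prob_iid_all_in[OF indep law cell_sets])
    moreover have "(\<Prod>i\<in>rest. measure \<mu> (cell t k i)) = P t"
      unfolding P_def cell_def by (rule prod.cong) auto
    ultimately show ?thesis
      using rest \<open>r1 \<noteq> r2\<close> unfolding UNIV_eq by (simp add: cell_def power2_eq_square)
  qed
  have "measure \<mu> S ^ CARD('i) / card K \<le> (\<Sum>t\<in>T. P t * (\<Sum>k\<in>K. (measure \<mu> {x \<in> S. \<psi> t x = k})\<^sup>2))"
    unfolding P_def T_def rest(3)[symmetric]
    by (rule finite_measure.measure_power_div_card_le_sum_level_sets[OF fin_\<mu>]) (use G K sets_\<mu> in auto)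
  also have "\<dots> = (\<Sum>(t, k)\<in>T \<times> K. prob (A t k))"
    by (simp add: prob_A sum.cartesian_product[symmetric] sum_distrib_left)
  also have "\<dots> = prob ?E"
    unfolding event(1) using G(1) K(1) event(2) A_sets
      finite_measure_finite_Union[of "T \<times> K" "\<lambda>(t, k). A t k"]
    by (simp add: T_def split_beta finite_PiE image_subset_iff)
  finally show ?thesis .
qed

section \<open>Small-ball probability of the smallest singular value\<close>

lemma borel_measurable_vec_lambda:
  fixes f :: "'i::finite \<Rightarrow> 'a \<Rightarrow> 'b::euclidean_space"
  assumes "\<And>i. f i \<in> borel_measurable M"
  shows "(\<lambda>\<omega>. \<chi> i. f i \<omega>) \<in> borel_measurable M"
proof (subst borel_measurable_euclidean_space, intro ballI)
  fix b :: "'b^'i" assume "b \<in> Basis"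
  then obtain i u where b: "b = axis i u" "u \<in> Basis" unfolding Basis_vec_def by auto
  have "(\<lambda>\<omega>. f i \<omega> \<bullet> u) \<in> borel_measurable M" using assms[of i] by measurable
  then show "(\<lambda>\<omega>. (\<chi> i. f i \<omega>) \<bullet> b) \<in> borel_measurable M"
    unfolding b by (simp add: inner_axis)
qed

lemma sets_cball_grid_index_eq:
  "{x \<in> cball (0::real^'n::finite) R. grid_index \<eta> x = g} \<in> sets borel"
  unfolding grid_index_def fun_eq_iff by measurable

lemma sets_cball_slope_cell_eq:
  "{x \<in> cball (0::'a::euclidean_space) R. slope_cell d (x \<bullet> a) (x \<bullet> b) = k} \<in> sets borel"
  by (cases k) (simp add: slope_cell_def; measurable)

lemma sets_cball_plane_label_eq: "{x \<in> cball 0 R. plane_label d C x = k} \<in> sets borel"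
proof (cases "orthonormal_pair_orthogonal_to C")
  case (Pair a b)
  then show ?thesis unfolding plane_label_def using sets_cball_slope_cell_eq[of R d a b k] by simp
qed

lemma card_slope_cells_le:
  assumes "0 < d"
  shows "0 < real (card ({0, 1::int} \<times> {-\<lceil>1 / d\<rceil>..\<lceil>1 / d\<rceil>}))"
    and "real (card ({0, 1::int} \<times> {-\<lceil>1 / d\<rceil>..\<lceil>1 / d\<rceil>})) \<le> 4 / d + 6"
proof -
  have "0 \<le> \<lceil>1 / d\<rceil>" using assms by (simp add: less_le_trans[of "-1" 0])
  then have card: "real (card ({0, 1::int} \<times> {-\<lceil>1 / d\<rceil>..\<lceil>1 / d\<rceil>})) = 4 * of_int \<lceil>1 / d\<rceil> + 2"
    by (simp add: card_cartesian_product of_nat_nat)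
  show "0 < real (card ({0, 1::int} \<times> {-\<lceil>1 / d\<rceil>..\<lceil>1 / d\<rceil>}))"
    unfolding card using \<open>0 \<le> \<lceil>1 / d\<rceil>\<close> by (simp del: zero_le_ceiling)
  have "4 * of_int \<lceil>1 / d\<rceil> + 2 \<le> 4 * (1 / d + 1) + (2::real)"
    by (intro add_right_mono mult_left_mono of_int_ceiling_le_add_one) simp
  then show "real (card ({0, 1::int} \<times> {-\<lceil>1 / d\<rceil>..\<lceil>1 / d\<rceil>})) \<le> 4 / d + 6"
    unfolding card by simp
qed

text \<open>Rounding the rows outside \<open>{r\<^sub>1, r\<^sub>2}\<close> to grid corners makes the plane, and hence the
  labels of rows \<open>r\<^sub>1, r\<^sub>2\<close>, a function of finitely many grid cells.\<close>
lemma (in prob_space) prob_smin_less_ge: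
  fixes X :: "'n::finite \<Rightarrow> 'a \<Rightarrow> real^'n"
  assumes indep: "indep_vars (\<lambda>_. borel) X UNIV" and law: "\<And>i. distr M borel (X i) = \<mu>"
    and "2 \<le> CARD('n)" and "0 < R" and "0 < \<epsilon>" "\<epsilon> \<le> 1"
  shows "measure \<mu> (cball 0 R) ^ CARD('n) / (32 * R + 6) * \<epsilon> \<le> prob {\<omega> \<in> space M. smin (\<chi> i. X i \<omega>) < \<epsilon>}"
proof -
  obtain r1 r2 :: 'n where "r1 \<noteq> r2"
    using \<open>2 \<le> CARD('n)\<close> card_le_Suc0_iff_eq[of "UNIV :: 'n set"] by force
  define \<eta> where "\<eta> = \<epsilon> / (4 * (real CARD('n))\<^sup>2)"
  define d where "d = \<epsilon> / (8 * R)"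
  have "0 < \<eta>" "0 < d" unfolding \<eta>_def d_def using \<open>0 < \<epsilon>\<close> \<open>0 < R\<close> by simp_all
  define K :: "(int \<times> int) set" where "K = {0, 1} \<times> {-\<lceil>1 / d\<rceil>..\<lceil>1 / d\<rceil>}"
  define \<psi> where "\<psi> t = plane_label d ((\<lambda>i. grid_point \<eta> (t i)) ` (- {r1, r2}))" for t :: "'n \<Rightarrow> 'n \<Rightarrow> int"
  have "measure \<mu> (cball 0 R) ^ CARD('n) / card K \<le> prob {\<omega> \<in> space M. (\<forall>i. X i \<omega> \<in> cball 0 R) \<and>
      \<psi> (restrict (\<lambda>i. grid_index \<eta> (X i \<omega>)) (- {r1, r2})) (X r1 \<omega>) =
      \<psi> (restrict (\<lambda>i. grid_index \<eta> (X i \<omega>)) (- {r1, r2})) (X r2 \<omega>)}" (is "_ \<le> prob ?E")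
  proof (rule prob_two_rows_same_label_ge[OF indep law \<open>r1 \<noteq> r2\<close>, where \<phi> = "grid_index \<eta>"
        and G = "UNIV \<rightarrow>\<^sub>E {-\<lceil>R / \<eta>\<rceil>..\<lceil>R / \<eta>\<rceil>}"])
    show "grid_index \<eta> ` cball 0 R \<subseteq> UNIV \<rightarrow>\<^sub>E {-\<lceil>R / \<eta>\<rceil>..\<lceil>R / \<eta>\<rceil>}"
      using grid_index_range[OF _ \<open>0 < \<eta>\<close>] by (intro image_subsetI) simp
    show "\<psi> t ` cball 0 R \<subseteq> K" for t
      unfolding \<psi>_def K_def using plane_label_range[OF \<open>0 < d\<close>] by (intro image_subsetI) simp
    show "{x \<in> cball 0 R. \<psi> t x = k} \<in> sets borel" for t k
      unfolding \<psi>_def by (rule sets_cball_plane_label_eq)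
  qed (rule sets_cball_grid_index_eq | simp add: finite_PiE K_def)+
  also have "\<dots> \<le> prob {\<omega> \<in> space M. smin (\<chi> i. X i \<omega>) < \<epsilon>}"
  proof (rule finite_measure_mono)
    have "2 * R * d + (real CARD('n))\<^sup>2 * \<eta> < \<epsilon>"
      using \<open>0 < R\<close> \<open>0 < \<epsilon>\<close> \<open>2 \<le> CARD('n)\<close> unfolding d_def \<eta>_def by (simp add: field_simps)
    show "?E \<subseteq> {\<omega> \<in> space M. smin (\<chi> i. X i \<omega>) < \<epsilon>}"
    proof
      fix \<omega> assume \<omega>: "\<omega> \<in> ?E"
      have "(\<lambda>i. grid_point \<eta> (restrict (\<lambda>i. grid_index \<eta> (X i \<omega>)) (- {r1, r2}) i)) ` (- {r1, r2}) =
          (\<lambda>i. grid_point \<eta> (grid_index \<eta> (X i \<omega>))) ` (- {r1, r2})"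
        by (rule image_cong) auto
      with \<omega> have "smin (\<chi> i. X i \<omega>) \<le> 2 * R * d + (real CARD('n))\<^sup>2 * \<eta>"
        unfolding \<psi>_def by (intro smin_le_if_same_plane_label[OF \<open>r1 \<noteq> r2\<close> \<open>0 < \<eta>\<close> \<open>0 < d\<close>]) auto
      with \<omega> \<open>2 * R * d + (real CARD('n))\<^sup>2 * \<eta> < \<epsilon>\<close>
      show "\<omega> \<in> {\<omega> \<in> space M. smin (\<chi> i. X i \<omega>) < \<epsilon>}" by auto
    qed
    have [measurable]: "(\<lambda>\<omega>. \<chi> i. X i \<omega>) \<in> borel_measurable M"
      using indep by (intro borel_measurable_vec_lambda) (auto simp: indep_vars_def)
    then show "{\<omega> \<in> space M. smin (\<chi> i. X i \<omega>) < \<epsilon>} \<in> events" by measurable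
  qed
  finally have prob_ge: "measure \<mu> (cball 0 R) ^ CARD('n) / card K \<le> prob {\<omega> \<in> space M. smin (\<chi> i. X i \<omega>) < \<epsilon>}" .
  have "real (card K) * \<epsilon> \<le> (4 / d + 6) * \<epsilon>"
    unfolding K_def using card_slope_cells_le(2)[OF \<open>0 < d\<close>] \<open>0 < \<epsilon>\<close> by (simp add: mult_right_mono)
  also have "\<dots> \<le> 32 * R + 6"
    using \<open>0 < \<epsilon>\<close> \<open>\<epsilon> \<le> 1\<close> unfolding d_def by (simp add: field_simps)
  finally have "real (card K) * \<epsilon> \<le> 32 * R + 6" .
  moreover have "0 < real (card K)" unfolding K_def by (rule card_slope_cells_le(1)[OF \<open>0 < d\<close>])
  ultimately have "\<epsilon> / (32 * R + 6) \<le> 1 / card K" using \<open>0 < R\<close> by (simp add: field_simps)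
  then show ?thesis
    using prob_ge mult_left_mono[of "\<epsilon> / (32 * R + 6)" "1 / card K" "measure \<mu> (cball 0 R) ^ CARD('n)"]
    by simp
qed

lemma exists_cball_measure_pos:
  fixes \<mu> :: "'b::real_normed_vector measure"
  assumes "prob_space \<mu>" "sets \<mu> = sets borel"
  obtains R :: real where "0 < R" "0 < measure \<mu> (cball 0 R)"
proof -
  interpret prob_space \<mu> by (rule assms(1))
  have "(\<lambda>k. measure \<mu> (cball 0 (Suc k))) \<longlonglongrightarrow> measure \<mu> (\<Union>k. cball 0 (Suc k))"
  proof (rule finite_Lim_measure_incseq)
    show "range (\<lambda>k. cball 0 (Suc k)) \<subseteq> sets \<mu>"
      unfolding assms(2) by (simp add: image_subset_iff borel_closed)
    show "incseq (\<lambda>k. cball (0::'b) (Suc k))" by (intro monoI subset_cball) simp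
  qed
  moreover have "(\<Union>k. cball 0 (Suc k)) = space \<mu>"
  proof -
    have "x \<in> (\<Union>k. cball 0 (Suc k))" for x :: 'b
    proof -
      obtain k where "norm x \<le> real k" using real_arch_simple by blast
      then have "x \<in> cball 0 (Suc k)" by simp
      then show ?thesis by blast
    qed
    then show ?thesis using sets_eq_imp_space_eq[OF assms(2)] by auto
  qed
  ultimately have "(\<lambda>k. measure \<mu> (cball 0 (Suc k))) \<longlonglongrightarrow> 1" using prob_space by simp
  then have "eventually (\<lambda>k. 0 < measure \<mu> (cball 0 (Suc k))) sequentially"
    by (rule order_tendstoD) simp
  then obtain k where "0 < measure \<mu> (cball 0 (Suc k))" by (auto dest: eventually_happens)
  then show ?thesis using that[of "Suc k"] by simp
qed

lemma (in prob_space) prob_smin_less_linear: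
  fixes X :: "'n::finite \<Rightarrow> 'a \<Rightarrow> real^'n"
  assumes indep: "indep_vars (\<lambda>_. borel) X UNIV"
    and iid: "\<And>i j. distr M borel (X i) = distr M borel (X j)" and "2 \<le> CARD('n)"
  obtains c where "0 < c" "\<And>\<epsilon>. 0 < \<epsilon> \<Longrightarrow> \<epsilon> \<le> 1 \<Longrightarrow> c * \<epsilon> \<le> prob {\<omega> \<in> space M. smin (\<chi> i. X i \<omega>) < \<epsilon>}"
proof -
  fix i0 :: 'n
  define \<mu> where "\<mu> = distr M borel (X i0)"
  have X: "X i \<in> borel_measurable M" for i using indep by (auto simp: indep_vars_def)
  have law: "distr M borel (X i) = \<mu>" for i unfolding \<mu>_def by (rule iid)
  obtain R where "0 < R" "0 < measure \<mu> (cball 0 R)"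
    using exists_cball_measure_pos[of \<mu>] prob_space_distr[OF X] unfolding \<mu>_def by auto
  show ?thesis
  proof
    show "0 < measure \<mu> (cball 0 R) ^ CARD('n) / (32 * R + 6)"
      using \<open>0 < R\<close> \<open>0 < measure \<mu> (cball 0 R)\<close> by simp
    show "measure \<mu> (cball 0 R) ^ CARD('n) / (32 * R + 6) * \<epsilon> \<le> prob {\<omega> \<in> space M. smin (\<chi> i. X i \<omega>) < \<epsilon>}"
      if "0 < \<epsilon>" "\<epsilon> \<le> 1" for \<epsilon>
      using prob_smin_less_ge[OF indep law \<open>2 \<le> CARD('n)\<close> \<open>0 < R\<close> that] .
  qed
qed

lemma Liminf_at_right_divide_pos:
  fixes g :: "real \<Rightarrow> real"
  assumes "0 < c" and "\<And>\<epsilon>. 0 < \<epsilon> \<Longrightarrow> \<epsilon> \<le> 1 \<Longrightarrow> c * \<epsilon> \<le> g \<epsilon>"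
  shows "0 < Liminf (at_right 0) (\<lambda>\<epsilon>. ereal (g \<epsilon> / \<epsilon>))"
proof -
  have "eventually (\<lambda>\<epsilon>::real. 0 < \<epsilon> \<and> \<epsilon> < 1) (at_right 0)"
    by (simp add: eventually_at_right_field exI[of _ 1])
  then have "eventually (\<lambda>\<epsilon>. ereal c \<le> ereal (g \<epsilon> / \<epsilon>)) (at_right 0)"
    by eventually_elim (use assms(2) in \<open>simp add: field_simps\<close>)
  then have "ereal c \<le> Liminf (at_right 0) (\<lambda>\<epsilon>. ereal (g \<epsilon> / \<epsilon>))"
    by (rule Liminf_bounded)
  then show ?thesis using assms(1) by (simp add: order_less_le_trans[rotated])
qed

lemma sum_dyadic_indicator_le_inverse:
  fixes x :: real
  assumes "0 < x"
  shows "(\<Sum>k<N. if x < 1 / 2 ^ Suc k then 2 ^ k else 0) \<le> 1 / x"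
proof -
  have "(\<Sum>k<N. if x < 1 / 2 ^ Suc k then 2 ^ k else 0) \<le> min (2 ^ N - 1) (1 / x)"
  proof (induction N)
    case (Suc N)
    show ?case
    proof (cases "x < 1 / 2 ^ Suc N")
      case True
      then have "(2::real) ^ Suc N < 1 / x" using assms by (simp add: field_simps)
      with Suc True show ?thesis by simp
    next
      case False
      then have "(\<Sum>k<Suc N. if x < 1 / 2 ^ Suc k then 2 ^ k else 0) =
          (\<Sum>k<N. if x < 1 / 2 ^ Suc k then 2 ^ k else (0::real))" by simp
      moreover have "(2::real) ^ N - 1 \<le> 2 ^ Suc N - 1" by simp
      ultimately show ?thesis using Suc.IH by linarith
    qed
  qed (use assms in simp)
  then show ?thesis by simp
qed

text \<open>Layer-cake estimate along the dyadic levels \<open>f < 2\<^sup>-\<^sup>k\<close>: each level contributes \<open>c / 2\<close>.\<close>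
lemma (in prob_space) nn_integral_inverse_ge:
  assumes f: "f \<in> borel_measurable M" and pos: "AE \<omega> in M. 0 < f \<omega>" and "0 < c"
    and small: "\<And>\<epsilon>. 0 < \<epsilon> \<Longrightarrow> \<epsilon> \<le> 1 \<Longrightarrow> c * \<epsilon> \<le> prob {\<omega> \<in> space M. f \<omega> < \<epsilon>}"
  shows "ennreal (real N * (c / 2)) \<le> (\<integral>\<^sup>+\<omega>. ennreal (1 / f \<omega>) \<partial>M)"
proof -
  define E where "E k = {\<omega> \<in> space M. f \<omega> < 1 / 2 ^ Suc k}" for k
  have E[measurable]: "E k \<in> events" for k unfolding E_def using f by measurable
  have "ennreal (2 ^ k) * ennreal (c / 2 ^ Suc k) = ennreal (c / 2)" for k
    using \<open>0 < c\<close> by (simp add: ennreal_mult[symmetric])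
  then have "(\<Sum>k<N. ennreal (2 ^ k) * ennreal (c / 2 ^ Suc k)) = of_nat N * ennreal (c / 2)"
    by simp
  moreover have "ennreal (real N * (c / 2)) = of_nat N * ennreal (c / 2)"
    by (subst ennreal_mult') (simp_all add: ennreal_of_nat_eq_real_of_nat)
  ultimately have "ennreal (real N * (c / 2)) = (\<Sum>k<N. ennreal (2 ^ k) * ennreal (c / 2 ^ Suc k))"
    by simp
  also have "\<dots> \<le> (\<Sum>k<N. ennreal (2 ^ k) * emeasure M (E k))"
  proof (intro sum_mono mult_left_mono)
    fix k
    have "1 \<le> (2::real) ^ Suc k" by (rule one_le_power) simp
    then have "c * (1 / 2 ^ Suc k) \<le> prob (E k)" unfolding E_def by (intro small) simp_all
    then show "ennreal (c / 2 ^ Suc k) \<le> emeasure M (E k)" by (simp add: emeasure_eq_measure)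
  qed simp
  also have "\<dots> = (\<Sum>k<N. \<integral>\<^sup>+\<omega>. ennreal (2 ^ k) * indicator (E k) \<omega> \<partial>M)"
    by (rule sum.cong) (simp_all add: nn_integral_cmult_indicator)
  also have "\<dots> = (\<integral>\<^sup>+\<omega>. (\<Sum>k<N. ennreal (2 ^ k) * indicator (E k) \<omega>) \<partial>M)"
    by (rule nn_integral_sum[symmetric]) simp
  also have "\<dots> \<le> (\<integral>\<^sup>+\<omega>. ennreal (1 / f \<omega>) \<partial>M)"
  proof (rule nn_integral_mono_AE, use pos in eventually_elim)
    fix \<omega> assume "0 < f \<omega>"
    have "(\<Sum>k<N. ennreal (2 ^ k) * indicator (E k) \<omega>) \<le>
        (\<Sum>k<N. ennreal (if f \<omega> < 1 / 2 ^ Suc k then 2 ^ k else 0))"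
      by (intro sum_mono) (simp add: E_def indicator_def)
    also have "\<dots> = ennreal (\<Sum>k<N. if f \<omega> < 1 / 2 ^ Suc k then 2 ^ k else 0)"
      by (rule sum_ennreal) simp
    also have "\<dots> \<le> ennreal (1 / f \<omega>)"
      by (intro ennreal_leI sum_dyadic_indicator_le_inverse \<open>0 < f \<omega>\<close>)
    finally show "(\<Sum>k<N. ennreal (2 ^ k) * indicator (E k) \<omega>) \<le> ennreal (1 / f \<omega>)" .
  qed
  finally show ?thesis .
qed

lemma (in prob_space) nn_integral_inverse_eq_infinity:
  assumes "f \<in> borel_measurable M" "AE \<omega> in M. 0 < f \<omega>" "0 < c"
    and "\<And>\<epsilon>. 0 < \<epsilon> \<Longrightarrow> \<epsilon> \<le> 1 \<Longrightarrow> c * \<epsilon> \<le> prob {\<omega> \<in> space M. f \<omega> < \<epsilon>}"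
  shows "(\<integral>\<^sup>+\<omega>. ennreal (1 / f \<omega>) \<partial>M) = \<infinity>"
proof (rule ccontr)
  assume "(\<integral>\<^sup>+\<omega>. ennreal (1 / f \<omega>) \<partial>M) \<noteq> \<infinity>"
  then obtain r where r: "(\<integral>\<^sup>+\<omega>. ennreal (1 / f \<omega>) \<partial>M) = ennreal r" "0 \<le> r"
    using ennreal_cases by (metis infinity_ennreal_def)
  obtain N :: nat where "2 * r / c < N" using reals_Archimedean2 by blast
  then have "r < real N * (c / 2)" using \<open>0 < c\<close> by (simp add: field_simps)
  moreover have "real N * (c / 2) \<le> r" using nn_integral_inverse_ge[OF assms, of N] r \<open>0 < c\<close> by simp
  ultimately show False by simp
qed

theorem mainTheorem1:
  fixes M :: "'a measure" and X :: "'n::finite \<Rightarrow> 'a \<Rightarrow> real^'n"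
  assumes "prob_space M"
    and "CARD('n) \<ge> 2"
    and "prob_space.indep_vars M (\<lambda>_. borel) X UNIV"
    and "\<And>i j. distr M borel (X i) = distr M borel (X j)"
  shows "Liminf (at_right 0)
           (\<lambda>\<epsilon>::real. ereal (measure M {\<omega> \<in> space M. smin (\<chi> i. X i \<omega>) < \<epsilon>} / \<epsilon>)) > 0 \<and>
         ((AE \<omega> in M. invertible (\<chi> i. X i \<omega>)) \<longrightarrow>
           (\<integral>\<^sup>+ \<omega>. ennreal (1 / smin (\<chi> i. X i \<omega>)) \<partial>M) = \<infinity> \<and>
           (\<integral>\<^sup>+ \<omega>. ennreal (opnorm2 (matrix_inv (\<chi> i. X i \<omega>))) \<partial>M) = \<infinity>)"
proof -
  interpret prob_space M by (rule assms(1))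
  obtain c where "0 < c"
    and small: "\<And>\<epsilon>. 0 < \<epsilon> \<Longrightarrow> \<epsilon> \<le> 1 \<Longrightarrow> c * \<epsilon> \<le> prob {\<omega> \<in> space M. smin (\<chi> i. X i \<omega>) < \<epsilon>}"
    using prob_smin_less_linear[OF assms(3,4,2)] by blast
  have X: "X i \<in> borel_measurable M" for i using assms(3) by (auto simp: indep_vars_def)
  have smin_meas: "(\<lambda>\<omega>. smin (\<chi> i. X i \<omega>)) \<in> borel_measurable M"
    using measurable_compose[OF borel_measurable_vec_lambda[OF X] borel_measurable_smin] .
  have "(\<integral>\<^sup>+ \<omega>. ennreal (1 / smin (\<chi> i. X i \<omega>)) \<partial>M) = \<infinity> \<and>
      (\<integral>\<^sup>+ \<omega>. ennreal (opnorm2 (matrix_inv (\<chi> i. X i \<omega>))) \<partial>M) = \<infinity>"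
    if "AE \<omega> in M. invertible (\<chi> i. X i \<omega>)"
  proof -
    from that have bound: "AE \<omega> in M. 0 < smin (\<chi> i. X i \<omega>) \<and>
        1 / smin (\<chi> i. X i \<omega>) \<le> opnorm2 (matrix_inv (\<chi> i. X i \<omega>))"
      by eventually_elim (rule invertible_smin_pos_inverse_le_opnorm2)
    then have inf: "(\<integral>\<^sup>+ \<omega>. ennreal (1 / smin (\<chi> i. X i \<omega>)) \<partial>M) = \<infinity>"
      by (intro nn_integral_inverse_eq_infinity[OF smin_meas _ \<open>0 < c\<close> small]) auto
    moreover have "(\<integral>\<^sup>+ \<omega>. ennreal (1 / smin (\<chi> i. X i \<omega>)) \<partial>M) \<le>
        (\<integral>\<^sup>+ \<omega>. ennreal (opnorm2 (matrix_inv (\<chi> i. X i \<omega>))) \<partial>M)"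
      using bound by (intro nn_integral_mono_AE) (auto intro: ennreal_leI)
    ultimately show ?thesis by (simp add: top_unique)
  qed
  moreover have "0 < Liminf (at_right 0) (\<lambda>\<epsilon>. ereal (prob {\<omega> \<in> space M. smin (\<chi> i. X i \<omega>) < \<epsilon>} / \<epsilon>))"
    by (rule Liminf_at_right_divide_pos[OF \<open>0 < c\<close> small])
  ultimately show ?thesis by blast
qed

end
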